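(* Let $f \colon \mathbb{R}^2 \to \mathbb{R}$ be given by $f(u,v) = u^2 + |v|$. Then every BFGS sequence $((u_k,v_k))_{k\ge 0}$ for $f$ has a subsequence converging to a point of the line $\{(u,v) : v = 0\}$.
   Context: A sequence $(x_k)$ in $\mathbb{R}^n$ is a BFGS sequence for $f$ if $f$ is differentiable at each $x_k$ with $\nabla f(x_k) \neq 0$, and there exist parameters $0<\mu<\nu<1$ and a positive definite $n\times n$ matrix $H_0$ such that, with $s_k = x_{k+1}-x_k$, $y_k = \nabla f(x_{k+1}) - \nabla f(x_k)$, $V_k = I - \frac{s_k y_k^T}{s_k^T y_k}$ and $H_{k+1} = V_k H_k V_k^T + \frac{s_k s_k^T}{s_k^T y_k}$, one has for all $k=0,1,2,\dots$: $H_k \nabla f(x_k) \in -\mathbb{R}_+ s_k$, $f(x_{k+1}) \le f(x_k) + \mu \nabla f(x_k)^T s_k$, and $\nabla f(x_{k+1})^T s_k \ge \nu \nabla f(x_k)^T s_k$. *)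

theory Defs
  imports "HOL-Analysis.Analysis"
begin

definition grad :: "(real^'n \<Rightarrow> real) \<Rightarrow> real^'n \<Rightarrow> real^'n" where
  "grad f x = (THE D. GDERIV f x :> D)"

definition outer :: "real^'n \<Rightarrow> real^'n \<Rightarrow> real^'n^'n" where
  "outer u v = (\<chi> i j. u$i * v$j)"

definition pos_def_matrix :: "real^'n^'n \<Rightarrow> bool" where
  "pos_def_matrix A \<longleftrightarrow> transpose A = A \<and> (\<forall>v. v \<noteq> 0 \<longrightarrow> v \<bullet> (A *v v) > 0)"

primrec bfgs_H :: "(real^'n \<Rightarrow> real) \<Rightarrow> (nat \<Rightarrow> real^'n) \<Rightarrow> real^'n^'n \<Rightarrow> nat \<Rightarrow> real^'n^'n" where
  "bfgs_H f x H0 0 = H0"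
| "bfgs_H f x H0 (Suc k) =
     (let s = x (Suc k) - x k;
          y = grad f (x (Suc k)) - grad f (x k);
          V = mat 1 - (1 / (s \<bullet> y)) *\<^sub>R outer s y
      in V ** bfgs_H f x H0 k ** transpose V + (1 / (s \<bullet> y)) *\<^sub>R outer s s)"

definition bfgs_sequence :: "(real^'n \<Rightarrow> real) \<Rightarrow> (nat \<Rightarrow> real^'n) \<Rightarrow> bool" where
  "bfgs_sequence f x \<longleftrightarrow>
     (\<forall>k. f differentiable (at (x k)) \<and> grad f (x k) \<noteq> 0) \<and>
     (\<exists>\<mu> \<nu> H0. 0 < \<mu> \<and> \<mu> < \<nu> \<and> \<nu> < 1 \<and> pos_def_matrix H0 \<and>
        (\<forall>k. let s = x (Suc k) - x k; g = grad f (x k) in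
           (\<exists>t>0. bfgs_H f x H0 k *v g = - (t *\<^sub>R s)) \<and>
           f (x (Suc k)) \<le> f (x k) + \<mu> * (g \<bullet> s) \<and>
           grad f (x (Suc k)) \<bullet> s \<ge> \<nu> * (g \<bullet> s)))"

end

theory Submission
  imports Defs
begin

text \<open>
  The function is differentiable exactly off the line v = 0, so every iterate has v_k \<noteq> 0;
  the Armijo condition makes f(x_k) decrease, which keeps the iterates bounded and makes the
  decreases -grad f(x_k) \<bullet> s_k summable. Suppose |v_k| stayed above some \<delta> > 0. Once the
  decreases are below 2\<delta>, the Armijo condition forbids v_k to change sign, so near the iterates
  f is the smooth function u^2 + \<sigma> v and all gradient differences have the form (2 (s_k)_1, 0).
  For such differences the BFGS update makes (H_k)_11 = 1/2 and the Schur complement of (H_k)_11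
  nondecreasing, and the curvature condition then bounds the decreases below by 4(1 - \<nu>) times
  a positive constant, contradicting summability. So v_k comes arbitrarily close to 0 infinitely
  often, and Bolzano-Weierstrass gives the subsequence.
\<close>

lemma grad_eqI:
  fixes f :: "real^'n \<Rightarrow> real"
  assumes "GDERIV f x :> D"
  shows "grad f x = D"
  unfolding grad_def
proof (rule the_equality)
  show "GDERIV f x :> D" by (rule assms)
  fix D' assume "GDERIV f x :> D'"
  then have "(\<lambda>h. h \<bullet> D') = (\<lambda>h. h \<bullet> D)"
    using assms unfolding gderiv_def by (rule has_derivative_unique)
  then have "(D - D') \<bullet> D' = (D - D') \<bullet> D" by metis
  then have "(D - D') \<bullet> (D - D') = 0" by (simp add: inner_diff_right)
  then show "D' = D" by simp
qed

lemma bounded_frequently_small_imp_convergent_subsequence_to_zero: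
  fixes x :: "nat \<Rightarrow> 'a::heine_borel" and \<phi> :: "'a \<Rightarrow> real"
  assumes bounded: "bounded (range x)" and cont: "continuous_on UNIV \<phi>"
    and small: "\<And>\<delta>. \<delta> > 0 \<Longrightarrow> \<exists>\<^sub>F k in sequentially. \<bar>\<phi> (x k)\<bar> < \<delta>"
  shows "\<exists>r p. strict_mono r \<and> (x \<circ> r) \<longlonglongrightarrow> p \<and> \<phi> p = 0"
proof -
  have "\<exists>r. \<forall>n. \<bar>\<phi> (x (r n))\<bar> < 1 / Suc n \<and> r n < r (Suc n)"
  proof (rule dependent_nat_choice)
    show "\<exists>k. \<bar>\<phi> (x k)\<bar> < 1 / Suc 0"
      using small[of 1] frequently_ex by auto
    show "\<exists>k'. \<bar>\<phi> (x k')\<bar> < 1 / Suc (Suc n) \<and> k < k'" for k n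
    proof -
      obtain k' where "Suc k \<le> k'" "\<bar>\<phi> (x k')\<bar> < 1 / Suc (Suc n)"
        using small[of "1 / Suc (Suc n)"] unfolding frequently_sequentially by auto
      then show ?thesis by auto
    qed
  qed
  then obtain r1 where r1: "strict_mono r1" and r1_small: "\<And>n. \<bar>\<phi> (x (r1 n))\<bar> < 1 / Suc n"
    by (auto simp: strict_mono_Suc_iff)
  have "bounded (range (x \<circ> r1))" using bounded by (rule bounded_subset) auto
  then obtain r2 p where r2: "strict_mono r2" and lim: "(x \<circ> r1 \<circ> r2) \<longlonglongrightarrow> p"
    using bounded_imp_convergent_subsequence by blast
  have "(\<lambda>n. \<phi> ((x \<circ> r1 \<circ> r2) n)) \<longlonglongrightarrow> \<phi> p"
    using continuous_on_tendsto_compose[OF cont lim] by simp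
  moreover have "(\<lambda>n. \<phi> ((x \<circ> r1 \<circ> r2) n)) \<longlonglongrightarrow> 0"
  proof (rule LIMSEQ_norm_0)
    fix n
    have "\<bar>\<phi> (x (r1 (r2 n)))\<bar> < 1 / Suc (r2 n)" by (rule r1_small)
    also have "\<dots> \<le> 1 / Suc n" using seq_suble[OF r2, of n] by (simp add: frac_le)
    finally show "norm (\<phi> ((x \<circ> r1 \<circ> r2) n)) < 1 / Suc n" by simp
  qed
  ultimately have "\<phi> p = 0" by (rule LIMSEQ_unique)
  then show ?thesis using lim strict_mono_o[OF r1 r2] by (metis comp_assoc)
qed

subsection \<open>Matrices and the BFGS update\<close>

lemma transpose_add: "transpose (A + B) = transpose A + transpose B"
  by (simp add: transpose_def vec_eq_iff)

lemma outer_mult_vector: "outer u v *v w = (v \<bullet> w) *\<^sub>R u"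
  by (simp add: outer_def matrix_vector_mult_def inner_vec_def vec_eq_iff sum_distrib_left mult_ac)

lemma transpose_outer: "transpose (outer u v) = outer v u"
  by (simp add: outer_def transpose_def vec_eq_iff mult.commute)

lemma quadratic_form_congruence:
  fixes A H :: "real^'n^'n"
  shows "z \<bullet> ((A ** H ** transpose A) *v z) = (transpose A *v z) \<bullet> (H *v (transpose A *v z))"
  by (metis dot_lmul_matrix matrix_vector_mul_assoc transpose_matrix_vector)

lemma bfgs_update_quadratic_form:
  fixes H :: "real^'n^'n" and s y z :: "real^'n" and c :: real
  defines "V \<equiv> mat 1 - c *\<^sub>R outer s y"
  shows "z \<bullet> ((V ** H ** transpose V + c *\<^sub>R outer s s) *v z)
     = (z - (c * (s \<bullet> z)) *\<^sub>R y) \<bullet> (H *v (z - (c * (s \<bullet> z)) *\<^sub>R y)) + c * (s \<bullet> z)^2"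
proof -
  have "transpose V = mat 1 - c *\<^sub>R outer y s"
    by (simp add: V_def transpose_def outer_def mat_def vec_eq_iff mult.commute)
  then have "transpose V *v z = z - (c * (s \<bullet> z)) *\<^sub>R y"
    by (simp add: matrix_vector_mult_diff_rdistrib flip: scaleR_matrix_vector_assoc del: transpose_matrix_vector)
       (simp add: outer_mult_vector)
  then show ?thesis
    by (simp add: matrix_vector_mult_add_rdistrib quadratic_form_congruence inner_add_right
        outer_mult_vector power2_eq_square inner_commute
        del: transpose_matrix_vector flip: scaleR_matrix_vector_assoc)
qed

lemma pos_def_bfgs_update:
  fixes H :: "real^'n^'n" and s y :: "real^'n"
  assumes H: "pos_def_matrix H" and sy: "s \<bullet> y > 0"
  defines "V \<equiv> mat 1 - (1 / (s \<bullet> y)) *\<^sub>R outer s y"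
  shows "pos_def_matrix (V ** H ** transpose V + (1 / (s \<bullet> y)) *\<^sub>R outer s s)"
    (is "pos_def_matrix ?H'")
proof -
  define c where "c = 1 / (s \<bullet> y)"
  have c: "c > 0" using sy by (simp add: c_def)
  have H_sym: "transpose H = H" and H_pos: "\<And>v. v \<noteq> 0 \<Longrightarrow> v \<bullet> (H *v v) > 0"
    using H unfolding pos_def_matrix_def by auto
  have "transpose ?H' = ?H'"
    by (simp add: transpose_add transpose_scalar transpose_outer matrix_transpose_mul H_sym matrix_mul_assoc)
  moreover have "v \<bullet> (?H' *v v) > 0" if "v \<noteq> 0" for v
  proof -
    define w where "w = v - (c * (s \<bullet> v)) *\<^sub>R y"
    have q: "v \<bullet> (?H' *v v) = w \<bullet> (H *v w) + c * (s \<bullet> v)^2"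
      unfolding w_def c_def V_def by (rule bfgs_update_quadratic_form)
    show ?thesis
    proof (cases "s \<bullet> v = 0")
      case True
      then show ?thesis using q H_pos[OF \<open>v \<noteq> 0\<close>] by (simp add: w_def)
    next
      case False
      have "w \<bullet> (H *v w) \<ge> 0" using H_pos[of w] by (cases "w = 0") auto
      then show ?thesis using q c False by (simp add: add_nonneg_pos)
    qed
  qed
  ultimately show ?thesis unfolding pos_def_matrix_def by blast
qed

lemma pos_def_search_direction_descent:
  fixes H :: "real^'n^'n"
  assumes "pos_def_matrix H" "g \<noteq> 0" "t > 0" "H *v g = - (t *\<^sub>R d)"
  shows "g \<bullet> d < 0"
proof -
  have "g \<bullet> (H *v g) > 0" using assms(1,2) unfolding pos_def_matrix_def by blast
  then have "- t * (g \<bullet> d) > 0" using assms(4) by simp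
  then show ?thesis using assms(3) by (simp add: mult_less_0_iff)
qed

text \<open>The update is unfolded only through H_Suc; otherwise simp expands every H (Suc k).\<close>
declare bfgs_H.simps(2) [simp del]

locale bfgs_run =
  fixes f :: "real^'n \<Rightarrow> real" and x :: "nat \<Rightarrow> real^'n" and \<mu> \<nu> :: real and H0 :: "real^'n^'n"
  assumes differentiable_at_iterate: "f differentiable (at (x k))"
    and grad_nonzero: "grad f (x k) \<noteq> 0"
    and wolfe_parameters: "0 < \<mu>" "\<mu> < \<nu>" "\<nu> < 1"
    and pos_def_H0: "pos_def_matrix H0"
    and search_direction: "\<exists>t>0. bfgs_H f x H0 k *v grad f (x k) = - (t *\<^sub>R (x (Suc k) - x k))"
    and armijo: "f (x (Suc k)) \<le> f (x k) + \<mu> * (grad f (x k) \<bullet> (x (Suc k) - x k))"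
    and curvature:
      "grad f (x (Suc k)) \<bullet> (x (Suc k) - x k) \<ge> \<nu> * (grad f (x k) \<bullet> (x (Suc k) - x k))"

lemma bfgs_sequence_imp_bfgs_run: "bfgs_sequence f x \<Longrightarrow> \<exists>\<mu> \<nu> H0. bfgs_run f x \<mu> \<nu> H0"
  unfolding bfgs_sequence_def bfgs_run_def Let_def by blast

context bfgs_run
begin

abbreviation g :: "nat \<Rightarrow> real^'n" where "g k \<equiv> grad f (x k)"
abbreviation s :: "nat \<Rightarrow> real^'n" where "s k \<equiv> x (Suc k) - x k"
abbreviation y :: "nat \<Rightarrow> real^'n" where "y k \<equiv> g (Suc k) - g k"
abbreviation H :: "nat \<Rightarrow> real^'n^'n" where "H k \<equiv> bfgs_H f x H0 k"

lemma H_Suc: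
  "H (Suc k) = (mat 1 - (1 / (s k \<bullet> y k)) *\<^sub>R outer (s k) (y k)) ** H k
     ** transpose (mat 1 - (1 / (s k \<bullet> y k)) *\<^sub>R outer (s k) (y k)) + (1 / (s k \<bullet> y k)) *\<^sub>R outer (s k) (s k)"
  by (simp only: bfgs_H.simps Let_def)

lemma s_dot_y_ge: "(1 - \<nu>) * - (g k \<bullet> s k) \<le> s k \<bullet> y k"
  using curvature[of k] by (simp add: inner_diff_left inner_commute algebra_simps)

lemma s_dot_y_pos_if_descent: "g k \<bullet> s k < 0 \<Longrightarrow> s k \<bullet> y k > 0"
  using s_dot_y_ge[of k] wolfe_parameters by (smt (verit) mult_pos_pos)

lemma pos_def_H: "pos_def_matrix (H k)"
proof (induction k)
  case 0
  show ?case using pos_def_H0 by simp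
next
  case (Suc k)
  obtain t where "t > 0" "H k *v g k = - (t *\<^sub>R s k)" using search_direction by blast
  then have "g k \<bullet> s k < 0" using pos_def_search_direction_descent Suc grad_nonzero by blast
  then have "s k \<bullet> y k > 0" by (rule s_dot_y_pos_if_descent)
  then show ?case unfolding H_Suc by (rule pos_def_bfgs_update[OF Suc])
qed

lemma descent: "g k \<bullet> s k < 0"
  using search_direction pos_def_search_direction_descent pos_def_H grad_nonzero by blast

lemma s_dot_y_pos: "s k \<bullet> y k > 0"
  using s_dot_y_pos_if_descent descent by blast

lemma decseq_f_iterates: "decseq (\<lambda>k. f (x k))"
  unfolding decseq_Suc_iff using armijo descent wolfe_parameters by (smt (verit) mult_pos_neg)

lemma summable_descent:
  assumes "\<And>k. b \<le> f (x k)"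
  shows "summable (\<lambda>k. - (g k \<bullet> s k))"
proof (rule summableI_nonneg_bounded)
  show "0 \<le> - (g k \<bullet> s k)" for k using descent[of k] by simp
  show "(\<Sum>k<n. - (g k \<bullet> s k)) \<le> (f (x 0) - b) / \<mu>" for n
  proof -
    have "(\<Sum>k<n. - (g k \<bullet> s k)) \<le> (\<Sum>k<n. (f (x k) - f (x (Suc k))) / \<mu>)"
      using armijo wolfe_parameters by (intro sum_mono) (simp add: field_simps)
    also have "\<dots> = (f (x 0) - f (x n)) / \<mu>"
      using sum_lessThan_telescope'[of "\<lambda>k. f (x k)" n] by (simp flip: sum_divide_distrib)
    also have "\<dots> \<le> (f (x 0) - b) / \<mu>"
      using assms[of n] wolfe_parameters by (simp add: divide_right_mono)
    finally show ?thesis .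
  qed
qed

end

subsection \<open>Two-by-two matrices\<close>

lemma quadratic_form_2:
  fixes A :: "real^2^2"
  assumes "A$1$2 = A$2$1"
  shows "z \<bullet> (A *v z) = A$1$1 * (z$1)^2 + 2 * A$1$2 * z$1 * z$2 + A$2$2 * (z$2)^2"
  using assms by (simp add: inner_vec_def sum_2 matrix_vector_mult_def power2_eq_square algebra_simps)

lemma pos_def_matrix_symmetric_2:
  fixes A :: "real^2^2"
  assumes "pos_def_matrix A"
  shows "A$1$2 = A$2$1"
proof -
  have "transpose A = A" using assms unfolding pos_def_matrix_def by blast
  from arg_cong[OF this, of "\<lambda>B. B$1$2"] show ?thesis by (simp add: transpose_def)
qed

definition schur_complement :: "real^2^2 \<Rightarrow> real" where
  "schur_complement A = A$2$2 - (A$1$2)^2 / A$1$1"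

lemma pos_def_schur_complement:
  fixes A :: "real^2^2"
  assumes A: "pos_def_matrix A"
  shows "schur_complement A > 0"
proof -
  have sym: "A$1$2 = A$2$1" using pos_def_matrix_symmetric_2[OF A] .
  have "(axis 1 1 :: real^2) \<bullet> (A *v axis 1 1) > 0"
    using A unfolding pos_def_matrix_def by (simp add: axis_eq_0_iff)
  then have a11: "A$1$1 > 0" by (simp add: quadratic_form_2[OF sym] axis_def)
  define v :: "real^2" where "v = vector [- A$1$2 / A$1$1, 1]"
  have "v \<noteq> 0" by (simp add: v_def vec_eq_iff forall_2)
  then have "v \<bullet> (A *v v) > 0" using A unfolding pos_def_matrix_def by blast
  moreover have "v \<bullet> (A *v v) = schur_complement A"
    using a11 by (simp add: quadratic_form_2[OF sym] v_def schur_complement_def field_simps power2_eq_square)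
  ultimately show ?thesis by simp
qed

lemma bfgs_update_entries_2:
  fixes H :: "real^2^2" and s :: "real^2"
  assumes sym: "H$1$2 = H$2$1" and s1: "s$1 \<noteq> 0"
  defines "y \<equiv> vector [2 * s$1, 0] :: real^2"
  defines "V \<equiv> mat 1 - (1 / (s \<bullet> y)) *\<^sub>R outer s y"
  defines "H' \<equiv> V ** H ** transpose V + (1 / (s \<bullet> y)) *\<^sub>R outer s s"
  shows "H'$1$1 = 1/2" "H'$1$2 = (s$2 / s$1) / 2"
    "H'$2$2 = (s$2 / s$1)^2 * H$1$1 - 2 * (s$2 / s$1) * H$1$2 + H$2$2 + (s$2 / s$1)^2 / 2"
  using s1 sym
  by (simp_all add: H'_def V_def y_def inner_vec_def sum_2 matrix_matrix_mult_def transpose_def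
      outer_def mat_def field_simps power2_eq_square)

lemma wolfe_step_lower_bound:
  fixes a c t \<nu> :: real
  assumes t: "0 < t" and a: "0 < a" and c: "0 < c" and \<nu>: "\<nu> < 1"
    and wolfe: "(1 - \<nu>) * ((2 * a + c) / t) \<le> 2 * a / t^2"
  shows "4 * (1 - \<nu>) * c \<le> (2 * a + c) / t"
proof -
  have "(1 - \<nu>) * (2 * a + c) * t = (1 - \<nu>) * ((2 * a + c) / t) * t^2"
    using t by (simp add: power2_eq_square)
  also have "\<dots> \<le> 2 * a / t^2 * t^2"
    using wolfe by (rule mult_right_mono) simp
  also have "\<dots> = 2 * a"
    using t by simp
  finally have "(1 - \<nu>) * (2 * a + c) * t \<le> 2 * a" .
  then have "4 * c * ((1 - \<nu>) * (2 * a + c) * t) \<le> 4 * c * (2 * a)"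
    using c by (intro mult_left_mono) auto
  also have "\<dots> \<le> (2 * a + c)^2"
    using sum_squares_ge_zero[of "2 * a - c" 0] by (simp add: power2_eq_square algebra_simps)
  finally have "(4 * (1 - \<nu>) * c * t) * (2 * a + c) \<le> (2 * a + c) * (2 * a + c)"
    by (simp add: power2_eq_square algebra_simps)
  then have "4 * (1 - \<nu>) * c * t \<le> 2 * a + c"
    using a c by (simp add: mult_le_cancel_right)
  then show ?thesis using t by (simp add: field_simps)
qed

subsection \<open>The function $u^2 + |v|$\<close>

definition quad_abs :: "real^2 \<Rightarrow> real" where
  "quad_abs z = (z$1)^2 + \<bar>z$2\<bar>"

lemma grad_quad_abs:
  assumes "z$2 \<noteq> 0"
  shows "grad quad_abs z = vector [2 * z$1, sgn (z$2)]"
proof -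
  define \<sigma> where "\<sigma> = sgn (z$2)"
  define U where "U = {w::real^2. \<sigma> * w$2 > 0}"
  have "((\<lambda>w::real^2. (w$1)^2 + \<sigma> * w$2) has_derivative (\<lambda>h. 2 * z$1 * h$1 + \<sigma> * h$2)) (at z)"
    by (auto intro!: derivative_eq_intros bounded_linear.has_derivative[OF bounded_linear_vec_nth]
        simp: power2_eq_square algebra_simps)
  moreover have "(\<lambda>h::real^2. 2 * z$1 * h$1 + \<sigma> * h$2) = (\<lambda>h. h \<bullet> vector [2 * z$1, \<sigma>])"
    by (auto simp: inner_vec_def sum_2 algebra_simps)
  moreover have "open U" unfolding U_def by (intro open_Collect_less continuous_intros)
  moreover have "z \<in> U" using assms by (auto simp: U_def \<sigma>_def sgn_if)
  moreover have "(w$1)^2 + \<sigma> * w$2 = quad_abs w" if "w \<in> U" for w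
    using that by (auto simp: U_def \<sigma>_def quad_abs_def sgn_if split: if_splits)
  ultimately have "(quad_abs has_derivative (\<lambda>h. h \<bullet> vector [2 * z$1, \<sigma>])) (at z)"
    by (auto intro: has_derivative_transform_within_open)
  then show ?thesis unfolding \<sigma>_def by (intro grad_eqI) (simp add: gderiv_def)
qed

lemma abs_not_differentiable_at_0: "\<not> (abs :: real \<Rightarrow> real) differentiable (at 0)"
proof
  assume "abs differentiable (at (0::real))"
  then obtain D :: real where D: "DERIV abs 0 :> D" unfolding real_differentiable_def by blast
  have "D - 1 = 0"
    using DERIV_diff[OF D DERIV_ident] by (rule DERIV_local_min[where d=1]) auto
  moreover have "D + 1 = 0"
    using DERIV_add[OF D DERIV_ident] by (rule DERIV_local_min[where d=1]) auto
  ultimately show False by simp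
qed

lemma differentiable_quad_abs_imp_off_axis:
  assumes "quad_abs differentiable (at z)"
  shows "z$2 \<noteq> 0"
proof
  assume z2: "z$2 = 0"
  have "(\<lambda>t::real. z + t *\<^sub>R axis 2 1) differentiable (at 0)"
    by (intro differentiable_add differentiable_const differentiable_scaleR differentiable_ident)
  moreover have "quad_abs differentiable (at ((\<lambda>t::real. z + t *\<^sub>R axis 2 1) 0))"
    using assms by simp
  ultimately have "(quad_abs \<circ> (\<lambda>t. z + t *\<^sub>R axis 2 1)) differentiable (at 0)"
    by (rule differentiable_chain_at)
  moreover have "quad_abs \<circ> (\<lambda>t. z + t *\<^sub>R axis 2 1) = (\<lambda>t. (z$1)^2 + \<bar>t\<bar>)"
    using z2 by (simp add: fun_eq_iff quad_abs_def axis_def)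
  ultimately have "(\<lambda>t. (z$1)^2 + \<bar>t\<bar>) differentiable (at (0::real))"
    by simp
  then have "(\<lambda>t. ((z$1)^2 + \<bar>t\<bar>) - (z$1)^2) differentiable (at (0::real))"
    by (rule differentiable_diff[OF _ differentiable_const])
  then show False using abs_not_differentiable_at_0 by simp
qed

lemma bounded_sublevel_quad_abs: "bounded {z. quad_abs z \<le> a}"
proof -
  have "norm z \<le> 1 + a" if "quad_abs z \<le> a" for z :: "real^2"
  proof -
    have "norm z \<le> \<bar>z$1\<bar> + \<bar>z$2\<bar>" using norm_le_l1_cart[of z] by (simp add: sum_2)
    moreover have "\<bar>z$1\<bar> \<le> 1 + (z$1)^2"
      using sum_squares_ge_zero[of "\<bar>z$1\<bar> - 1" 0] by (simp add: power2_eq_square algebra_simps)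
    ultimately show ?thesis using that by (simp add: quad_abs_def)
  qed
  then show ?thesis unfolding bounded_iff by blast
qed

subsection \<open>BFGS on $u^2 + |v|$\<close>

locale bfgs_run_quad_abs = bfgs_run quad_abs x \<mu> \<nu> H0
  for x :: "nat \<Rightarrow> real^2" and \<mu> \<nu> H0
begin

lemma iterate_off_axis: "x k$2 \<noteq> 0"
  using differentiable_at_iterate differentiable_quad_abs_imp_off_axis by blast

lemma g_eq: "g k = vector [2 * x k$1, sgn (x k$2)]"
  using grad_quad_abs iterate_off_axis by blast

lemma descent_tendsto_zero: "(\<lambda>k. - (g k \<bullet> s k)) \<longlonglongrightarrow> 0"
  using summable_descent[of 0] by (simp add: quad_abs_def summable_LIMSEQ_zero)

lemma sign_stable:
  assumes "- (g k \<bullet> s k) \<le> 2 * \<bar>x (Suc k)$2\<bar>"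
  shows "sgn (x (Suc k)$2) = sgn (x k$2)"
proof (rule ccontr)
  let ?u = "x k$1" and ?v = "x k$2" and ?u' = "x (Suc k)$1" and ?v' = "x (Suc k)$2"
  assume "sgn ?v' \<noteq> sgn ?v"
  then have "sgn ?v * (?v' - ?v) = - (\<bar>?v'\<bar> + \<bar>?v\<bar>)"
    using iterate_off_axis[of k] iterate_off_axis[of "Suc k"] by (auto simp: sgn_if split: if_splits)
  then have gs: "g k \<bullet> s k = 2 * ?u * (?u' - ?u) - \<bar>?v'\<bar> - \<bar>?v\<bar>"
    by (simp add: g_eq inner_vec_def sum_2)
  have "2 * ?u * (?u' - ?u) \<le> ?u'^2 - ?u^2"
    using sum_squares_ge_zero[of "?u' - ?u" 0] by (simp add: power2_eq_square algebra_simps)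
  moreover have "\<mu> * (g k \<bullet> s k) < 0"
    using descent[of k] wolfe_parameters by (simp add: mult_pos_neg)
  ultimately show False using armijo[of k] gs assms by (simp add: quad_abs_def)
qed

context
  fixes M :: nat and \<sigma> :: real
  assumes sign_eventually_constant: "\<And>k. M \<le> k \<Longrightarrow> sgn (x k$2) = \<sigma>"
begin

lemma sigma_squared: "\<sigma> * \<sigma> = 1"
  using sign_eventually_constant[of M] iterate_off_axis[of M] by (auto simp: sgn_if)

lemma g_eventually: "M \<le> k \<Longrightarrow> g k = vector [2 * x k$1, \<sigma>]"
  using g_eq sign_eventually_constant by simp

lemma y_eventually: "M \<le> k \<Longrightarrow> y k = vector [2 * s k$1, 0]"
  using g_eventually[of k] g_eventually[of "Suc k"] by (simp add: vec_eq_iff forall_2 algebra_simps)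

lemma s1_eventually_nonzero: "M \<le> k \<Longrightarrow> s k$1 \<noteq> 0"
  using s_dot_y_pos[of k] y_eventually[of k] by (auto simp: inner_vec_def sum_2)

lemma H_Suc_entries_eventually:
  assumes k: "M \<le> k"
  defines "\<rho> \<equiv> s k$2 / s k$1"
  shows "H (Suc k)$1$1 = 1/2" "H (Suc k)$1$2 = \<rho> / 2"
    "H (Suc k)$2$2 = \<rho>^2 * H k$1$1 - 2 * \<rho> * H k$1$2 + H k$2$2 + \<rho>^2 / 2"
  using bfgs_update_entries_2[OF pos_def_matrix_symmetric_2[OF pos_def_H] s1_eventually_nonzero[OF k]]
  unfolding H_Suc y_eventually[OF k] \<rho>_def by simp_all

lemma H11_eventually: "Suc M \<le> k \<Longrightarrow> H k$1$1 = 1/2"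
  using H_Suc_entries_eventually(1)[of "k - 1"] by (cases k) auto

lemma schur_complement_H_mono:
  assumes "Suc M \<le> k"
  shows "schur_complement (H k) \<le> schur_complement (H (Suc k))"
proof -
  define \<rho> where "\<rho> = s k$2 / s k$1"
  note H_Suc_entries = H_Suc_entries_eventually[OF Suc_leD[OF assms], folded \<rho>_def]
  have "schur_complement (H (Suc k)) - schur_complement (H k) = (\<rho> - 2 * H k$1$2)^2 / 2"
    using assms unfolding schur_complement_def H_Suc_entries H11_eventually[OF assms]
    by (simp add: power2_eq_square algebra_simps)
  moreover have "(\<rho> - 2 * H k$1$2)^2 / 2 \<ge> 0" by simp
  ultimately show ?thesis by linarith
qed

lemma descent_lower_bound:
  assumes k: "Suc M \<le> k"
  shows "4 * (1 - \<nu>) * schur_complement (H k) \<le> - (g k \<bullet> s k)"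
proof -
  obtain t where t: "t > 0" "H k *v g k = - (t *\<^sub>R s k)" using search_direction by blast
  have sym: "H k$1$2 = H k$2$1" using pos_def_matrix_symmetric_2[OF pos_def_H] .
  have g: "g k = vector [2 * x k$1, \<sigma>]" using g_eventually k by simp
  define w where "w = x k$1 + H k$1$2 * \<sigma>"
  have "w = (H k *v g k)$1"
    using H11_eventually[OF k] by (simp add: g w_def matrix_vector_mult_def sum_2)
  also have "\<dots> = - t * s k$1"
    using t(2) by simp
  finally have s1: "s k$1 = - w / t" using t by (simp add: field_simps)
  then have "w \<noteq> 0" using s1_eventually_nonzero[of k] k by auto
  have "g k \<bullet> (H k *v g k) = - t * (g k \<bullet> s k)"
    unfolding t(2) by simp
  moreover have "g k \<bullet> (H k *v g k) = 2 * w^2 + schur_complement (H k)"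
    using sigma_squared unfolding quadratic_form_2[OF sym] g w_def schur_complement_def H11_eventually[OF k]
    by (simp add: power2_eq_square algebra_simps)
  ultimately have gs: "- (g k \<bullet> s k) = (2 * w^2 + schur_complement (H k)) / t"
    using t by (simp add: field_simps)
  have "s k \<bullet> y k = 2 * (s k$1)^2"
    unfolding y_eventually[OF Suc_leD[OF k]] by (simp add: inner_vec_def sum_2 power2_eq_square)
  also have "\<dots> = 2 * w^2 / t^2"
    unfolding s1 by (simp add: power_divide)
  finally have "s k \<bullet> y k = 2 * w^2 / t^2" .
  then have "(1 - \<nu>) * ((2 * w^2 + schur_complement (H k)) / t) \<le> 2 * w^2 / t^2"
    using s_dot_y_ge[of k] gs by simp
  then show ?thesis
    using wolfe_step_lower_bound[OF t(1) _ pos_def_schur_complement[OF pos_def_H]] \<open>w \<noteq> 0\<close>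
      wolfe_parameters gs by simp
qed

lemma eventually_constant_sign_absurd: False
proof -
  define c where "c = 4 * (1 - \<nu>) * schur_complement (H (Suc M))"
  have "c > 0"
    using pos_def_schur_complement[OF pos_def_H, of "Suc M"] wolfe_parameters by (simp add: c_def)
  have "schur_complement (H (Suc M)) \<le> schur_complement (H k)" if "Suc M \<le> k" for k
    using that
  proof (induction k rule: dec_induct)
    case (step k)
    then show ?case using schur_complement_H_mono[of k] by simp
  qed simp
  then have lower: "c \<le> - (g k \<bullet> s k)" if "Suc M \<le> k" for k
    using descent_lower_bound[OF that] that wolfe_parameters unfolding c_def by (smt (verit) mult_left_mono)
  obtain N where "\<And>k. N \<le> k \<Longrightarrow> - (g k \<bullet> s k) < c"
    using order_tendstoD(2)[OF descent_tendsto_zero \<open>c > 0\<close>] unfolding eventually_sequentially by blast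
  then show False using lower[of "max N (Suc M)"] by (meson max.cobounded1 max.cobounded2 not_less)
qed

end

lemma frequently_near_axis:
  assumes "\<delta> > 0"
  shows "\<exists>\<^sub>F k in sequentially. \<bar>x k$2\<bar> < \<delta>"
proof (rule ccontr)
  assume "\<not> (\<exists>\<^sub>F k in sequentially. \<bar>x k$2\<bar> < \<delta>)"
  then have "\<forall>\<^sub>F k in sequentially. \<delta> \<le> \<bar>x k$2\<bar>"
    by (simp add: not_frequently not_less)
  moreover have "\<forall>\<^sub>F k in sequentially. - (g k \<bullet> s k) < 2 * \<delta>"
    using descent_tendsto_zero assms by (intro order_tendstoD) auto
  ultimately have "\<forall>\<^sub>F k in sequentially. \<delta> \<le> \<bar>x k$2\<bar> \<and> - (g k \<bullet> s k) < 2 * \<delta>"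
    by (rule eventually_conj)
  then obtain M where M: "\<And>k. M \<le> k \<Longrightarrow> \<delta> \<le> \<bar>x k$2\<bar> \<and> - (g k \<bullet> s k) < 2 * \<delta>"
    unfolding eventually_sequentially by blast
  have "sgn (x k$2) = sgn (x M$2)" if "M \<le> k" for k
    using that
  proof (induction k rule: dec_induct)
    case (step k)
    have "- (g k \<bullet> s k) \<le> 2 * \<bar>x (Suc k)$2\<bar>"
      using M[of k] M[of "Suc k"] step(1) by linarith
    then show ?case using sign_stable step(3) by simp
  qed simp
  then show False by (rule eventually_constant_sign_absurd)
qed

lemma bounded_iterates: "bounded (range x)"
proof (rule bounded_subset[OF bounded_sublevel_quad_abs])
  show "range x \<subseteq> {z. quad_abs z \<le> quad_abs (x 0)}"
    using decseq_f_iterates by (auto dest: decseqD[of _ 0])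
qed

end

theorem corollary4p4:
  fixes x :: "nat \<Rightarrow> real^2"
  assumes "bfgs_sequence (\<lambda>z::real^2. (z$1)^2 + \<bar>z$2\<bar>) x"
  shows "\<exists>r p. strict_mono r \<and> (x \<circ> r) \<longlonglongrightarrow> p \<and> p$2 = 0"
proof -
  obtain \<mu> \<nu> H0 where "bfgs_run quad_abs x \<mu> \<nu> H0"
    using bfgs_sequence_imp_bfgs_run assms unfolding quad_abs_def[abs_def] by blast
  then interpret bfgs_run_quad_abs x \<mu> \<nu> H0
    unfolding bfgs_run_quad_abs_def .
  have "continuous_on UNIV (\<lambda>z::real^2. z$2)"
    by (intro continuous_on_component continuous_on_id)
  then show ?thesis
    by (rule bounded_frequently_small_imp_convergent_subsequence_to_zero[OF bounded_iterates _ frequently_near_axis])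
qed

end
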